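(* Let $\mathcal{X}$ be Polish with a lower semicontinuous metric $d$, let $\alpha,\theta:[0,\infty)\to[0,\infty)$ be convex increasing bijections (so $\alpha(0)=\theta(0)=0$), and let $\mu$ be a Borel probability measure on $\mathcal{X}$ such that $\alpha(\mathcal{T}_{\theta(d)}(\nu,\mu))\le H(\nu|\mu)$ for all Borel probability measures $\nu$. Then for every $x_o\in\mathcal{X}$ there exists $\varepsilon>0$ such that $$\int_{\mathcal{X}}\exp\big(\alpha\circ\theta(\varepsilon\, d(x,x_o))\big)\,d\mu(x)<+\infty.$$
   Context: $\mathcal{T}_{\theta(d)}(\nu,\mu)=\inf_\pi\int\theta(d(x,y))\,d\pi(x,y)$ over couplings $\pi$ of $\nu$ and $\mu$. $H(\nu|\mu)=\int\log\frac{d\nu}{d\mu}d\nu$ if $\nu\ll\mu$, $+\infty$ otherwise. *)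

theory Defs
  imports "HOL-Probability.Probability"
begin

definition is_metric :: "('a \<Rightarrow> 'a \<Rightarrow> real) \<Rightarrow> bool" where
  "is_metric d \<longleftrightarrow>
     (\<forall>x y. d x y = 0 \<longleftrightarrow> x = y) \<and>
     (\<forall>x y. d x y = d y x) \<and>
     (\<forall>x y z. d x z \<le> d x y + d y z)"

definition lsc :: "('b::topological_space \<Rightarrow> real) \<Rightarrow> bool" where
  "lsc f \<longleftrightarrow> (\<forall>t. open {z. t < f z})"

definition borel_prob :: "'b::topological_space measure \<Rightarrow> bool" where
  "borel_prob \<nu> \<longleftrightarrow> prob_space \<nu> \<and> sets \<nu> = sets borel"

definition couplings :: "'a::topological_space measure \<Rightarrow> 'a measure \<Rightarrow> ('a \<times> 'a) measure set" where
  "couplings \<nu> \<mu> = {\<pi>. borel_prob \<pi> \<and> distr \<pi> borel fst = \<nu> \<and> distr \<pi> borel snd = \<mu>}"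

definition transport_cost ::
  "('a \<Rightarrow> 'a \<Rightarrow> real) \<Rightarrow> 'a::topological_space measure \<Rightarrow> 'a measure \<Rightarrow> ennreal" where
  "transport_cost c \<nu> \<mu> = (INF \<pi>\<in>couplings \<nu> \<mu>. \<integral>\<^sup>+ z. ennreal (c (fst z) (snd z)) \<partial>\<pi>)"

text \<open>The integral is taken as (positive part) - (negative part); the negative part
  is always finite for probability measures.\<close>
definition rel_entropy :: "'a measure \<Rightarrow> 'a measure \<Rightarrow> ereal" where
  "rel_entropy \<nu> \<mu> =
     (if absolutely_continuous \<mu> \<nu> then
        enn2ereal (\<integral>\<^sup>+ x. ennreal (max 0 (ln (enn2real (RN_deriv \<mu> \<nu> x)))) \<partial>\<nu>)
        - enn2ereal (\<integral>\<^sup>+ x. ennreal (max 0 (- ln (enn2real (RN_deriv \<mu> \<nu> x)))) \<partial>\<nu>)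
      else \<infinity>)"

definition ext_fun :: "(real \<Rightarrow> real) \<Rightarrow> ennreal \<Rightarrow> ereal" where
  "ext_fun \<alpha> t = (if t = \<top> then \<infinity> else ereal (\<alpha> (enn2real t)))"

end

theory Submission
  imports Defs
begin

(* Idea: apply the inequality to \<nu> = \<mu> conditioned on the tail B = {d(\<cdot>,xo) \<ge> R}.
   Its relative entropy is at most ln (1/\<mu>(B)), while any coupling of \<nu> with \<mu> must carry
   the mass of B over a distance at least R/2 into the ball {d(\<cdot>,xo) < R/2}, which holds at
   least half of the mass of \<mu> once R is large.  Hence \<mu>(B) \<le> exp (- \<alpha>(\<theta>(R/4))), a tail
   bound of exactly the shape of the integrand.  Because \<alpha> and \<theta> are convex and vanish at 0,
   g = \<alpha> \<circ> \<theta> is superhomogeneous (c g(t) \<le> g(ct) for c \<ge> 1), so the weights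
   exp (g(k/16)) on the shells {\<lfloor>d(\<cdot>,xo)\<rfloor> = k} are beaten by the tail bound and the
   integral is dominated by a geometric series. *)

text \<open>Conditioning \<mu> on an event B costs at most ln (1/\<mu>(B)) in relative entropy:
  the density of \<mu>( \<cdot> | B) is 1/\<mu>(B) on B, where the conditioned measure lives.\<close>
lemma rel_entropy_uniform_measure_le:
  assumes P: "prob_space \<mu>" and B: "B \<in> sets \<mu>" and pos: "0 < measure \<mu> B"
  shows "rel_entropy (uniform_measure \<mu> B) \<mu> \<le> ereal (ln (1 / measure \<mu> B))"
proof -
  interpret P: prob_space \<mu> by (fact P)
  define q where "q = measure \<mu> B"
  define \<nu> where "\<nu> = uniform_measure \<mu> B"
  define f where "f x = indicator B x / emeasure \<mu> B" for x
  have eB: "emeasure \<mu> B = ennreal q" unfolding q_def by (simp add: P.emeasure_eq_measure)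
  have \<nu>P: "prob_space \<nu>" unfolding \<nu>_def
    by (rule prob_space_uniform_measure) (use eB pos in \<open>auto simp: q_def\<close>)
  have fm: "f \<in> borel_measurable \<mu>" unfolding f_def using B by measurable
  have \<nu>dens: "\<nu> = density \<mu> f" unfolding \<nu>_def uniform_measure_def f_def by simp
  have ac: "absolutely_continuous \<mu> \<nu>" unfolding \<nu>dens by (rule absolutely_continuousI_density[OF fm])
  have AERN: "AE x in \<mu>. f x = RN_deriv \<mu> \<nu> x"
    by (rule sigma_finite_measure.RN_deriv_unique[OF prob_space_imp_sigma_finite[OF P] fm \<nu>dens[symmetric]])
  have "AE x in \<mu>. 0 < f x \<longrightarrow> RN_deriv \<mu> \<nu> x = ennreal (1/q)"
    using AERN
  proof eventually_elim
    case (elim x)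
    show ?case
    proof
      assume "0 < f x"
      then have "x \<in> B" unfolding f_def by (cases "x \<in> B") auto
      then have "f x = ennreal (1/q)" unfolding f_def eB using pos
        by (simp add: q_def divide_ennreal[symmetric])
      then show "RN_deriv \<mu> \<nu> x = ennreal (1/q)" using elim by simp
    qed
  qed
  then have AEnu: "AE x in \<nu>. RN_deriv \<mu> \<nu> x = ennreal (1/q)"
    unfolding \<nu>dens by (subst AE_density[OF fm])
  have qpos: "0 < q" and lnpos: "0 \<le> ln (1/q)" using pos by (simp_all add: q_def)
  have "(\<integral>\<^sup>+ x. ennreal (max 0 (ln (enn2real (RN_deriv \<mu> \<nu> x)))) \<partial>\<nu>) = (\<integral>\<^sup>+ x. ennreal (ln (1/q)) \<partial>\<nu>)"
    by (rule nn_integral_cong_AE) (use AEnu lnpos qpos in \<open>auto elim!: eventually_mono\<close>)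
  also have "\<dots> = ennreal (ln (1/q))" using prob_space.emeasure_space_1[OF \<nu>P] by simp
  finally have pos_part: "(\<integral>\<^sup>+ x. ennreal (max 0 (ln (enn2real (RN_deriv \<mu> \<nu> x)))) \<partial>\<nu>) = ennreal (ln (1/q))" .
  have drop_neg: "ereal l - enn2ereal X \<le> ereal l" for l X
    using enn2ereal_nonneg[of X] by (cases "enn2ereal X") auto
  show ?thesis
    using ac pos_part lnpos unfolding rel_entropy_def \<nu>_def[symmetric] q_def[symmetric]
    by (simp add: enn2ereal_ennreal drop_neg)
qed

text \<open>If \<nu> lives on B and the cost is at least c0 between points of B and C, then every
  coupling of \<nu> and \<mu> puts mass at least 1 - \<mu>(-C) on B \<times> C, so the transport cost is at
  least c0 (1 - \<mu>(-C)).\<close>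
lemma transport_cost_ge_separated_mass:
  fixes c :: "'a::topological_space \<Rightarrow> 'a \<Rightarrow> real"
  assumes B: "B \<in> sets borel" and C: "C \<in> sets borel"
    and \<nu>_B: "emeasure \<nu> (- B) = 0" and c0: "0 \<le> c0"
    and sep: "\<And>x y. x \<in> B \<Longrightarrow> y \<in> C \<Longrightarrow> c0 \<le> c x y"
  shows "ennreal (c0 * (1 - measure \<mu> (- C))) \<le> transport_cost c \<nu> \<mu>"
  unfolding transport_cost_def
proof (rule INF_greatest)
  fix \<pi> assume "\<pi> \<in> couplings \<nu> \<mu>"
  then have \<pi>P: "prob_space \<pi>" and sets\<pi>: "sets \<pi> = sets borel"
    and m1: "distr \<pi> borel fst = \<nu>" and m2: "distr \<pi> borel snd = \<mu>"
    by (auto simp: couplings_def borel_prob_def)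
  interpret Q: prob_space \<pi> by (fact \<pi>P)
  have space\<pi>: "space \<pi> = UNIV" using sets_eq_imp_space_eq[OF sets\<pi>] by simp
  have fstm: "fst \<in> measurable \<pi> borel" and sndm: "snd \<in> measurable \<pi> borel"
    unfolding measurable_cong_sets[OF sets\<pi> refl]
    by (intro borel_measurable_continuous_onI continuous_intros)+
  have nB: "- B \<in> sets borel" and nC: "- C \<in> sets borel" using B C by auto
  define S where "S = {z. fst z \<in> B \<and> snd z \<in> C}"
  have E1: "fst -` (- B) \<in> sets \<pi>" using measurable_sets[OF fstm nB] space\<pi> by simp
  have E2: "snd -` (- C) \<in> sets \<pi>" using measurable_sets[OF sndm nC] space\<pi> by simp
  have S_eq: "- S = fst -` (- B) \<union> snd -` (- C)" unfolding S_def by auto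
  have Ss: "S \<in> sets \<pi>"
  proof -
    have "S = space \<pi> - (fst -` (- B) \<union> snd -` (- C))" unfolding S_def space\<pi> by auto
    then show ?thesis using E1 E2 by auto
  qed
  have m1B: "measure \<pi> (fst -` (- B)) = 0"
    using measure_distr[OF fstm nB] m1 space\<pi> \<nu>_B by (simp add: measure_def)
  have m2C: "measure \<pi> (snd -` (- C)) = measure \<mu> (- C)"
    using measure_distr[OF sndm nC] m2 space\<pi> by simp
  have mS: "1 - measure \<mu> (- C) \<le> measure \<pi> S"
  proof -
    have "measure \<pi> (- S) \<le> measure \<pi> (fst -` (- B)) + measure \<pi> (snd -` (- C))"
      unfolding S_eq by (rule measure_Un_le[OF E1 E2])
    moreover have "measure \<pi> (- S) = 1 - measure \<pi> S"
      using Q.prob_compl[OF Ss] space\<pi> by (simp add: Compl_eq_Diff_UNIV)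
    ultimately show ?thesis using m1B m2C by simp
  qed
  have pw: "ennreal c0 * indicator S z \<le> ennreal (c (fst z) (snd z))" for z
    using sep[of "fst z" "snd z"] by (cases "z \<in> S") (auto simp: S_def intro: ennreal_leI)
  have "ennreal (c0 * (1 - measure \<mu> (- C))) \<le> ennreal c0 * ennreal (measure \<pi> S)"
    using mS c0 by (simp add: ennreal_mult'[symmetric] ennreal_leI mult_left_mono)
  also have "\<dots> = (\<integral>\<^sup>+ z. ennreal c0 * indicator S z \<partial>\<pi>)"
    using Ss by (simp add: Q.emeasure_eq_measure nn_integral_cmult_indicator)
  also have "\<dots> \<le> (\<integral>\<^sup>+ z. ennreal (c (fst z) (snd z)) \<partial>\<pi>)"
    by (rule nn_integral_mono) (rule pw)
  finally show "ennreal (c0 * (1 - measure \<mu> (- C))) \<le> (\<integral>\<^sup>+ z. ennreal (c (fst z) (snd z)) \<partial>\<pi>)" .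
qed

lemma strict_mono_bij_zero:
  fixes f :: "real \<Rightarrow> real"
  assumes mono: "strict_mono_on {0..} f" and bij: "bij_betw f {0..} {0..}"
  shows "f 0 = 0"
proof -
  obtain x where x: "x \<ge> 0" "f x = 0" using bij by (force simp: bij_betw_def)
  have "0 \<le> f 0" using bij by (auto simp: bij_betw_def)
  moreover have "x \<noteq> 0 \<Longrightarrow> f 0 < f x" using x by (intro strict_mono_onD[OF mono]) auto
  ultimately show ?thesis using x by force
qed

lemma convex_on_scale_le:
  fixes f :: "real \<Rightarrow> real"
  assumes "convex_on {0..} f" "f 0 = 0" "0 \<le> t" "0 \<le> c" "c \<le> 1"
  shows "f (c * t) \<le> c * f t"
proof -
  have "f ((1 - c) *\<^sub>R 0 + c *\<^sub>R t) \<le> (1 - c) * f 0 + c * f t"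
    by (rule convex_onD[OF assms(1)]) (use assms in auto)
  then show ?thesis using assms by simp
qed

lemma convex_on_superhomogeneous:
  fixes f :: "real \<Rightarrow> real"
  assumes "convex_on {0..} f" "f 0 = 0" "0 \<le> t" "1 \<le> c"
  shows "c * f t \<le> f (c * t)"
proof -
  have "f ((1/c) * (c * t)) \<le> (1/c) * f (c * t)"
    by (rule convex_on_scale_le[OF assms(1,2)]) (use assms in auto)
  then show ?thesis using assms by (simp add: field_simps)
qed

text \<open>Superhomogeneity passes to the composition \<alpha> \<circ> \<theta>; this is what makes the tail bound
  below beat the exponential weight in the final integral.\<close>
lemma comp_superhomogeneous:
  fixes \<alpha> \<theta> :: "real \<Rightarrow> real"
  assumes \<alpha>_convex: "convex_on {0..} \<alpha>" and \<alpha>_mono: "strict_mono_on {0..} \<alpha>"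
    and \<alpha>_bij: "bij_betw \<alpha> {0..} {0..}"
    and \<theta>_convex: "convex_on {0..} \<theta>" and \<theta>_mono: "strict_mono_on {0..} \<theta>"
    and \<theta>_bij: "bij_betw \<theta> {0..} {0..}"
    and t: "0 \<le> t" and c: "1 \<le> c"
  shows "c * \<alpha> (\<theta> t) \<le> \<alpha> (\<theta> (c * t))"
proof -
  have \<theta>0: "\<theta> 0 = 0" and \<alpha>0: "\<alpha> 0 = 0"
    using strict_mono_bij_zero \<alpha>_mono \<alpha>_bij \<theta>_mono \<theta>_bij by blast+
  have \<theta>t: "0 \<le> \<theta> t" using \<theta>_bij t by (auto simp: bij_betw_def)
  have "c * \<alpha> (\<theta> t) \<le> \<alpha> (c * \<theta> t)"
    by (rule convex_on_superhomogeneous[OF \<alpha>_convex \<alpha>0 \<theta>t c])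
  also have "\<dots> \<le> \<alpha> (\<theta> (c * t))"
  proof (rule strict_mono_on_leD[OF \<alpha>_mono])
    show "c * \<theta> t \<le> \<theta> (c * t)" by (rule convex_on_superhomogeneous[OF \<theta>_convex \<theta>0 t c])
    show "c * \<theta> t \<in> {0..}" using c \<theta>t by simp
    then show "\<theta> (c * t) \<in> {0..}" using \<open>c * \<theta> t \<le> \<theta> (c * t)\<close> by simp
  qed
  finally show ?thesis .
qed

lemma metric_nonneg: "is_metric d \<Longrightarrow> 0 \<le> d x y"
  unfolding is_metric_def by (metis add_le_same_cancel1 mult_2 zero_le_double_add_iff_zero_le_single_add)

lemma lsc_borel_measurable:
  fixes f :: "'b::topological_space \<Rightarrow> real"
  shows "lsc f \<Longrightarrow> f \<in> borel_measurable borel"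
  unfolding borel_measurable_iff_greater lsc_def by auto

lemma distance_to_point_measurable:
  fixes d :: "'a::topological_space \<Rightarrow> 'a \<Rightarrow> real"
  assumes "lsc (\<lambda>z::'a \<times> 'a. d (fst z) (snd z))"
  shows "(\<lambda>x. d x xo) \<in> borel_measurable borel"
proof -
  have "(\<lambda>x::'a. (x, xo)) \<in> borel_measurable borel"
    by (intro borel_measurable_continuous_onI continuous_intros)
  from measurable_compose[OF this lsc_borel_measurable[OF assms]] show ?thesis by simp
qed

text \<open>The entropic tail inequality: testing the transport-entropy inequality against \<mu>
  conditioned on the tail B = {d(\<cdot>,xo) \<ge> R} (which must travel at least R/2 to reach the
  ball C = {d(\<cdot>,xo) < R/2}) gives \<alpha>(\<theta>(R/2) (1 - \<mu>(d \<ge> R/2))) \<le> ln (1 / \<mu>(d \<ge> R)).\<close>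
lemma transport_entropy_tail:
  fixes d :: "'a::topological_space \<Rightarrow> 'a \<Rightarrow> real"
    and \<alpha> \<theta> :: "real \<Rightarrow> real"
  assumes d_metric: "is_metric d"
    and d_lsc: "lsc (\<lambda>z::'a \<times> 'a. d (fst z) (snd z))"
    and \<alpha>_mono: "strict_mono_on {0..} \<alpha>"
    and \<theta>_mono: "strict_mono_on {0..} \<theta>" and \<theta>_bij: "bij_betw \<theta> {0..} {0..}"
    and \<mu>_prob: "borel_prob \<mu>"
    and TCI: "\<And>\<nu>. borel_prob \<nu> \<Longrightarrow>
               ext_fun \<alpha> (transport_cost (\<lambda>x y. \<theta> (d x y)) \<nu> \<mu>) \<le> rel_entropy \<nu> \<mu>"
    and R: "0 \<le> R" and pos: "0 < measure \<mu> {x. R \<le> d x xo}"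
  shows "\<alpha> (\<theta> (R/2) * (1 - measure \<mu> {x. R/2 \<le> d x xo})) \<le> ln (1 / measure \<mu> {x. R \<le> d x xo})"
proof -
  define B where "B = {x. R \<le> d x xo}"
  define C where "C = {x. d x xo < R/2}"
  define \<nu> where "\<nu> = uniform_measure \<mu> B"
  define L where "L = \<theta> (R/2) * (1 - measure \<mu> (- C))"
  have P: "prob_space \<mu>" and sets\<mu>: "sets \<mu> = sets borel"
    using \<mu>_prob by (auto simp: borel_prob_def)
  have Dm: "(\<lambda>x. d x xo) \<in> borel_measurable borel"
    by (rule distance_to_point_measurable[OF d_lsc])
  have B: "B \<in> sets borel" and C: "C \<in> sets borel"
    using measurable_sets[OF Dm, of "{R..}"] measurable_sets[OF Dm, of "{..<R/2}"]
    by (auto simp: B_def C_def vimage_def)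
  have entropy: "rel_entropy \<nu> \<mu> \<le> ereal (ln (1 / measure \<mu> B))"
    unfolding \<nu>_def by (rule rel_entropy_uniform_measure_le[OF P]) (use B sets\<mu> pos B_def in auto)
  have "emeasure \<mu> B \<noteq> 0" "emeasure \<mu> B \<noteq> \<infinity>"
    using pos by (auto simp: B_def measure_def)
  then have \<nu>_prob: "borel_prob \<nu>"
    using prob_space_uniform_measure sets\<mu> unfolding \<nu>_def borel_prob_def by auto
  have \<theta>R: "0 \<le> \<theta> (R/2)" using \<theta>_bij R by (auto simp: bij_betw_def)
  txt \<open>Any coupling must move the mass of B (where \<nu> lives) into C (where \<mu> mostly lives),
    and points of B and C are at distance at least R/2 by the triangle inequality.\<close>
  have transport: "ennreal L \<le> transport_cost (\<lambda>x y. \<theta> (d x y)) \<nu> \<mu>"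
    unfolding L_def
  proof (rule transport_cost_ge_separated_mass[OF B C _ \<theta>R])
    show "emeasure \<nu> (- B) = 0" unfolding \<nu>_def using B sets\<mu> by (subst emeasure_uniform_measure) auto
    fix x y assume "x \<in> B" "y \<in> C"
    moreover have "d x xo \<le> d x y + d y xo" using d_metric unfolding is_metric_def by blast
    ultimately have "R/2 \<le> d x y" unfolding B_def C_def by auto
    then show "\<theta> (R/2) \<le> \<theta> (d x y)" using R by (intro strict_mono_on_leD[OF \<theta>_mono]) auto
  qed
  define T where "T = transport_cost (\<lambda>x y. \<theta> (d x y)) \<nu> \<mu>"
  have ext: "ext_fun \<alpha> T \<le> ereal (ln (1 / measure \<mu> B))"
    using TCI[OF \<nu>_prob] entropy unfolding T_def by (rule order_trans)
  then have T_fin: "T \<noteq> \<top>" by (auto simp: ext_fun_def)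
  with ext have \<alpha>T: "\<alpha> (enn2real T) \<le> ln (1 / measure \<mu> B)" by (simp add: ext_fun_def)
  have "0 \<le> L" unfolding L_def using \<theta>R prob_space.prob_le_1[OF P] by simp
  moreover have "L \<le> enn2real T"
    using enn2real_mono[OF transport[folded T_def]] T_fin \<open>0 \<le> L\<close> by (simp add: top.not_eq_extremum)
  ultimately have "\<alpha> L \<le> \<alpha> (enn2real T)" by (intro strict_mono_on_leD[OF \<alpha>_mono]) auto
  moreover have "- C = {x. R/2 \<le> d x xo}" unfolding C_def by auto
  ultimately show ?thesis using \<alpha>T unfolding L_def B_def by simp
qed

text \<open>Once \<mu>(d(\<cdot>,xo) \<ge> R1) \<le> 1/2, the tails decay like exp (- \<alpha>(\<theta>(R/4))) for R \<ge> 2 R1,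
  using \<theta>(R/4) \<le> \<theta>(R/2)/2.\<close>
lemma tail_decay:
  fixes d :: "'a::topological_space \<Rightarrow> 'a \<Rightarrow> real"
    and \<alpha> \<theta> :: "real \<Rightarrow> real"
  assumes d_metric: "is_metric d"
    and d_lsc: "lsc (\<lambda>z::'a \<times> 'a. d (fst z) (snd z))"
    and \<alpha>_mono: "strict_mono_on {0..} \<alpha>"
    and \<theta>_convex: "convex_on {0..} \<theta>" and \<theta>_mono: "strict_mono_on {0..} \<theta>"
    and \<theta>_bij: "bij_betw \<theta> {0..} {0..}"
    and \<mu>_prob: "borel_prob \<mu>"
    and TCI: "\<And>\<nu>. borel_prob \<nu> \<Longrightarrow>
               ext_fun \<alpha> (transport_cost (\<lambda>x y. \<theta> (d x y)) \<nu> \<mu>) \<le> rel_entropy \<nu> \<mu>"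
    and half: "measure \<mu> {x. R1 \<le> d x xo} \<le> 1/2"
    and R1: "0 \<le> R1" and R: "2 * R1 \<le> R"
  shows "measure \<mu> {x. R \<le> d x xo} \<le> exp (- \<alpha> (\<theta> (R/4)))"
proof (cases "measure \<mu> {x. R \<le> d x xo} = 0")
  case True
  then show ?thesis by simp
next
  case False
  define q where "q t = measure \<mu> {x. t \<le> d x xo}" for t
  have P: "prob_space \<mu>" and sets\<mu>: "sets \<mu> = sets borel"
    using \<mu>_prob by (auto simp: borel_prob_def)
  interpret P: prob_space \<mu> by (fact P)
  have qpos: "0 < q R" using False by (simp add: q_def zero_less_measure_iff)
  have "{x. t \<le> d x xo} \<in> sets \<mu>" for t
    using measurable_sets[OF distance_to_point_measurable[OF d_lsc], of "{t..}" xo] sets\<mu>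
    by (simp add: vimage_def)
  then have "q (R/2) \<le> q R1" unfolding q_def
    using R by (intro P.finite_measure_mono) auto
  then have q_half: "1/2 \<le> 1 - q (R/2)" using half by (simp add: q_def)
  have \<theta>0: "\<theta> 0 = 0" by (rule strict_mono_bij_zero[OF \<theta>_mono \<theta>_bij])
  have \<theta>_nonneg: "0 \<le> t \<Longrightarrow> 0 \<le> \<theta> t" for t using \<theta>_bij by (auto simp: bij_betw_def)
  have "\<theta> (R/4) \<le> 1/2 * \<theta> (R/2)"
    using convex_on_scale_le[OF \<theta>_convex \<theta>0, of "R/2" "1/2"] R R1 by simp
  also have "\<dots> \<le> \<theta> (R/2) * (1 - q (R/2))"
    using mult_left_mono[OF q_half \<theta>_nonneg[of "R/2"]] R R1 by (simp add: mult.commute)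
  finally have "\<alpha> (\<theta> (R/4)) \<le> \<alpha> (\<theta> (R/2) * (1 - q (R/2)))"
    using \<theta>_nonneg[of "R/4"] R R1 by (intro strict_mono_on_leD[OF \<alpha>_mono]) auto
  also have "\<dots> \<le> ln (1 / q R)" unfolding q_def
    by (rule transport_entropy_tail[OF d_metric d_lsc \<alpha>_mono \<theta>_mono \<theta>_bij \<mu>_prob TCI])
       (use R R1 qpos q_def in auto)
  also have "\<dots> = - ln (q R)" using qpos by (simp add: ln_div)
  finally have "ln (q R) \<le> - \<alpha> (\<theta> (R/4))" by simp
  then show ?thesis using qpos unfolding q_def by (metis exp_le_cancel_iff exp_ln)
qed

text \<open>Tails of a real random variable become arbitrarily small (continuity from above).\<close>
lemma tail_eventually_small:
  fixes D :: "'a \<Rightarrow> real"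
  assumes P: "prob_space M" and D: "D \<in> borel_measurable M" and e: "0 < e"
  shows "\<exists>R\<ge>0. measure M {x \<in> space M. R \<le> D x} < e"
proof -
  interpret P: prob_space M by (fact P)
  define A where "A i = {x \<in> space M. real i \<le> D x}" for i :: nat
  have "A i \<in> sets M" for i unfolding A_def using D by measurable
  then have A_sets: "range A \<subseteq> sets M" by auto
  have "\<Inter> (range A) = {}"
  proof -
    have "x \<notin> A (nat (ceiling (D x + 1)))" for x
      using real_nat_ceiling_ge[of "D x + 1"] unfolding A_def by auto
    then show ?thesis by auto
  qed
  moreover have "(\<lambda>i. measure M (A i)) \<longlonglongrightarrow> measure M (\<Inter> (range A))"
    by (rule P.finite_Lim_measure_decseq) (use A_sets in \<open>auto simp: A_def monotone_on_def\<close>)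
  ultimately have "(\<lambda>i. measure M (A i)) \<longlonglongrightarrow> 0" by simp
  then have "eventually (\<lambda>i. measure M (A i) < e) sequentially"
    by (rule order_tendstoD) (rule e)
  then obtain i where "measure M (A i) < e" by (auto simp: eventually_sequentially)
  then show ?thesis unfolding A_def by (intro exI[of _ "real i"]) auto
qed

lemma nn_integral_le_shells:
  fixes D :: "'a \<Rightarrow> real" and h :: "real \<Rightarrow> real"
  assumes D: "D \<in> borel_measurable M" and D_nonneg: "\<And>x. 0 \<le> D x"
    and h_mono: "\<And>s t. 0 \<le> s \<Longrightarrow> s \<le> t \<Longrightarrow> h s \<le> h t"
  shows "(\<integral>\<^sup>+ x. ennreal (h (D x)) \<partial>M)
         \<le> (\<Sum>k. ennreal (h (real k + 1)) * emeasure M {x \<in> space M. nat \<lfloor>D x\<rfloor> = k})"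
proof -
  define A where "A k = {x \<in> space M. nat \<lfloor>D x\<rfloor> = k}" for k
  have A_sets: "A k \<in> sets M" for k unfolding A_def using D by measurable
  have pw: "ennreal (h (D x)) \<le> (\<Sum>k. ennreal (h (real k + 1)) * indicator (A k) x)"
    if x: "x \<in> space M" for x
  proof -
    define k0 where "k0 = nat \<lfloor>D x\<rfloor>"
    have "(\<lambda>k. ennreal (h (real k + 1)) * indicator (A k) x)
          = (\<lambda>k. if k = k0 then ennreal (h (real k + 1)) else 0)"
      using x by (auto simp: A_def k0_def)
    then have "(\<Sum>k. ennreal (h (real k + 1)) * indicator (A k) x) = ennreal (h (real k0 + 1))"
      using sums_unique[OF sums_single[of k0 "\<lambda>k. ennreal (h (real k + 1))"]] by simp
    moreover have "D x \<le> real k0 + 1"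
      using D_nonneg[of x] unfolding k0_def by linarith
    ultimately show ?thesis using D_nonneg[of x] h_mono by (simp add: ennreal_leI)
  qed
  have "(\<integral>\<^sup>+ x. ennreal (h (D x)) \<partial>M) \<le> (\<integral>\<^sup>+ x. (\<Sum>k. ennreal (h (real k + 1)) * indicator (A k) x) \<partial>M)"
    by (rule nn_integral_mono) (rule pw)
  also have "\<dots> = (\<Sum>k. \<integral>\<^sup>+ x. ennreal (h (real k + 1)) * indicator (A k) x \<partial>M)"
    by (rule nn_integral_suminf) (use A_sets in measurable)
  also have "\<dots> = (\<Sum>k. ennreal (h (real k + 1)) * emeasure M (A k))"
    using A_sets by (simp add: nn_integral_cmult_indicator)
  finally show ?thesis unfolding A_def .
qed

text \<open>Integrability criterion: if g is nonnegative, nondecreasing, superhomogeneous with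
  g(1) > 0, and the tails of D satisfy \<mu>(D \<ge> R) \<le> exp (- g(R/4)) for large R, then
  exp (g (D/16)) is integrable: the shell terms are eventually dominated by a geometric series.\<close>
lemma exp_integrable_of_tail:
  fixes D :: "'a \<Rightarrow> real" and g :: "real \<Rightarrow> real"
  assumes P: "prob_space M" and D: "D \<in> borel_measurable M" and D_nonneg: "\<And>x. 0 \<le> D x"
    and g_nonneg: "\<And>t. 0 \<le> t \<Longrightarrow> 0 \<le> g t"
    and g_mono: "\<And>s t. 0 \<le> s \<Longrightarrow> s \<le> t \<Longrightarrow> g s \<le> g t"
    and g_super: "\<And>c t. 0 \<le> t \<Longrightarrow> 1 \<le> c \<Longrightarrow> c * g t \<le> g (c * t)"
    and g_pos: "0 < g 1"
    and tail: "\<And>R. R0 \<le> R \<Longrightarrow> measure M {x \<in> space M. R \<le> D x} \<le> exp (- g (R/4))"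
  shows "(\<integral>\<^sup>+ x. ennreal (exp (g (D x / 16))) \<partial>M) < \<infinity>"
proof -
  interpret P: prob_space M by (fact P)
  define a where "a k = exp (g ((real k + 1) / 16))" for k :: nat
  define S where "S k = {x \<in> space M. nat \<lfloor>D x\<rfloor> = k}" for k
  define K :: nat where "K = max (nat \<lceil>R0\<rceil>) 16"
  define r where "r = exp (- g 1 / 8)"
  define C where "C = a K / r ^ K"
  have S_sets: "S k \<in> sets M" for k unfolding S_def using D by measurable
  have r: "0 < r" "r < 1" unfolding r_def using g_pos by auto
  have a_ge_1: "1 \<le> a k" for k unfolding a_def using g_nonneg[of "(real k + 1)/16"] by simp
  have a_mono: "k \<le> l \<Longrightarrow> a k \<le> a l" for k l unfolding a_def by (simp add: g_mono)
  have C: "1 \<le> C"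
    using a_ge_1[of K] power_le_one[of r K] r unfolding C_def by (simp add: field_simps)
  txt \<open>Shells below K are controlled by the largest weight, shells beyond K by the tail
    bound, which beats the weight thanks to superhomogeneity of g.\<close>
  have term_bound: "a k * measure M (S k) \<le> C * r ^ k" for k
  proof (cases "k < K")
    case True
    have "a k * measure M (S k) \<le> a k * 1"
      using a_ge_1[of k] by (intro mult_left_mono) auto
    also have "\<dots> \<le> a K" using a_mono[of k K] True by simp
    also have "\<dots> \<le> C * r ^ k"
      using power_decreasing[of k K r] True r a_ge_1[of K] unfolding C_def
      by (simp add: field_simps mult_left_mono)
    finally show ?thesis .
  next
    case False
    then have Kk: "max (nat \<lceil>R0\<rceil>) 16 \<le> k" unfolding K_def by (simp only: not_less)
    then have k16: "16 \<le> real k" by linarith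
    have kR0: "R0 \<le> real k"
      using real_nat_ceiling_ge[of R0] le_trans[OF max.cobounded1 Kk] by linarith
    have "measure M (S k) \<le> measure M {x \<in> space M. real k \<le> D x}"
      using D D_nonneg by (intro P.finite_measure_mono) (auto simp: S_def)
    also have "\<dots> \<le> exp (- g (real k / 4))" by (rule tail[OF kR0])
    also have "\<dots> \<le> exp (- 2 * g (real k / 8))" using g_super[of "real k / 8" 2] k16 by simp
    finally have mS: "measure M (S k) \<le> exp (- 2 * g (real k / 8))" .
    have "a k \<le> exp (g (real k / 8))" unfolding a_def using k16 by (simp add: g_mono)
    then have "a k * measure M (S k) \<le> exp (g (real k / 8)) * exp (- 2 * g (real k / 8))"
      using mS by (intro mult_mono) auto
    also have "\<dots> = exp (- g (real k / 8))" by (simp flip: exp_add)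
    also have "\<dots> \<le> exp (- (real k / 8 * g 1))" using g_super[of 1 "real k / 8"] k16 by simp
    also have "\<dots> = r ^ k" unfolding r_def by (simp flip: exp_of_nat_mult)
    also have "\<dots> \<le> C * r ^ k" using C r by simp
    finally show ?thesis .
  qed
  have "(\<integral>\<^sup>+ x. ennreal (exp (g (D x / 16))) \<partial>M) \<le> (\<Sum>k. ennreal (a k) * emeasure M (S k))"
    unfolding a_def S_def
    by (rule nn_integral_le_shells[where h = "\<lambda>t. exp (g (t / 16))", OF D D_nonneg])
       (simp add: g_mono add_divide_distrib)
  also have "\<dots> = (\<Sum>k. ennreal (a k * measure M (S k)))"
    using S_sets by (simp add: P.emeasure_eq_measure ennreal_mult a_def)
  also have "\<dots> \<le> (\<Sum>k. ennreal (C * r ^ k))"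
    by (rule suminf_le) (use term_bound in \<open>auto intro: ennreal_leI\<close>)
  also have "\<dots> < \<infinity>"
  proof -
    have "summable (\<lambda>k. C * r ^ k)" using r by (intro summable_mult summable_geometric) auto
    then have "(\<Sum>k. ennreal (C * r ^ k)) \<noteq> \<top>"
      by (rule ennreal_suminf_neq_top) (use C r in auto)
    then show ?thesis by (simp add: top.not_eq_extremum)
  qed
  finally show ?thesis .
qed

theorem mainTheorem8:
  fixes d :: "'a::polish_space \<Rightarrow> 'a \<Rightarrow> real"
    and \<alpha> \<theta> :: "real \<Rightarrow> real"
    and \<mu> :: "'a measure"
  assumes d_metric: "is_metric d"
    and d_lsc: "lsc (\<lambda>z::'a \<times> 'a. d (fst z) (snd z))"
    and \<alpha>_convex: "convex_on {0..} \<alpha>" and \<alpha>_mono: "strict_mono_on {0..} \<alpha>"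
    and \<alpha>_bij: "bij_betw \<alpha> {0..} {0..}"
    and \<theta>_convex: "convex_on {0..} \<theta>" and \<theta>_mono: "strict_mono_on {0..} \<theta>"
    and \<theta>_bij: "bij_betw \<theta> {0..} {0..}"
    and \<mu>_prob: "borel_prob \<mu>"
    and TCI: "\<And>\<nu>. borel_prob \<nu> \<Longrightarrow>
               ext_fun \<alpha> (transport_cost (\<lambda>x y. \<theta> (d x y)) \<nu> \<mu>) \<le> rel_entropy \<nu> \<mu>"
  shows "\<forall>xo. \<exists>\<epsilon>>0. (\<integral>\<^sup>+ x. ennreal (exp (\<alpha> (\<theta> (\<epsilon> * d x xo)))) \<partial>\<mu>) < \<infinity>"
proof
  fix xo
  define g where "g t = \<alpha> (\<theta> t)" for t
  have P: "prob_space \<mu>" and sets\<mu>: "sets \<mu> = sets borel" using \<mu>_prob by (auto simp: borel_prob_def)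
  have space\<mu>: "space \<mu> = UNIV" using sets_eq_imp_space_eq[OF sets\<mu>] by simp
  have D: "(\<lambda>x. d x xo) \<in> borel_measurable \<mu>"
    using distance_to_point_measurable[OF d_lsc] measurable_cong_sets[OF sets\<mu> refl] by blast
  obtain R1 where R1: "0 \<le> R1" "measure \<mu> {x. R1 \<le> d x xo} < 1/2"
    using tail_eventually_small[OF P D, of "1/2"] space\<mu> by auto
  have tail: "measure \<mu> {x \<in> space \<mu>. R \<le> d x xo} \<le> exp (- g (R/4))" if "2 * R1 \<le> R" for R
    using tail_decay[OF d_metric d_lsc \<alpha>_mono \<theta>_convex \<theta>_mono \<theta>_bij \<mu>_prob TCI _ R1(1) that] R1(2)
    by (simp add: space\<mu> g_def)
  have \<theta>_pos: "0 < \<theta> 1" and \<alpha>_nonneg: "\<And>t. 0 \<le> t \<Longrightarrow> 0 \<le> \<alpha> t" and \<theta>_nonneg: "\<And>t. 0 \<le> t \<Longrightarrow> 0 \<le> \<theta> t"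
    using strict_mono_onD[OF \<theta>_mono, of 0 1] strict_mono_bij_zero[OF \<theta>_mono \<theta>_bij] \<alpha>_bij \<theta>_bij
    by (auto simp: bij_betw_def)
  have "(\<integral>\<^sup>+ x. ennreal (exp (g (d x xo / 16))) \<partial>\<mu>) < \<infinity>"
  proof (rule exp_integrable_of_tail[OF P D metric_nonneg[OF d_metric] _ _ _ _ tail])
    show "0 \<le> t \<Longrightarrow> 0 \<le> g t" for t unfolding g_def using \<alpha>_nonneg \<theta>_nonneg by blast
    show "0 \<le> s \<Longrightarrow> s \<le> t \<Longrightarrow> g s \<le> g t" for s t unfolding g_def using \<theta>_nonneg
      by (intro strict_mono_on_leD[OF \<alpha>_mono] strict_mono_on_leD[OF \<theta>_mono]) auto
    show "0 \<le> t \<Longrightarrow> 1 \<le> c \<Longrightarrow> c * g t \<le> g (c * t)" for c t unfolding g_def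
      by (rule comp_superhomogeneous[OF \<alpha>_convex \<alpha>_mono \<alpha>_bij \<theta>_convex \<theta>_mono \<theta>_bij])
    show "0 < g 1" unfolding g_def using strict_mono_onD[OF \<alpha>_mono, of 0 "\<theta> 1"] \<theta>_pos
      strict_mono_bij_zero[OF \<alpha>_mono \<alpha>_bij] by auto
  qed
  then show "\<exists>\<epsilon>>0. (\<integral>\<^sup>+ x. ennreal (exp (\<alpha> (\<theta> (\<epsilon> * d x xo)))) \<partial>\<mu>) < \<infinity>"
    by (intro exI[of _ "1/16"]) (simp add: g_def)
qed

end
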